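(* Assume (H0)–(H2), (B1) and (B2) for the family of planar viscous shocks $\bar u^\varepsilon$ described in the context, and let $\lambda_*^\varepsilon(\tilde\xi)$ be the family of Evans-function roots with expansion $\lambda_*^\varepsilon(\tilde\xi)=i\tilde\xi\tau_*(\varepsilon)-\tilde\xi^2\beta(\varepsilon)+\delta(\varepsilon)\tilde\xi^3+r(\varepsilon,\tilde\xi)\tilde\xi^4$, $r\in C^1$. Then there is a unique $C^1$ function $\mathcal E$, defined for $\tilde\xi$ near $0$, with $\mathcal E(0)=0$, such that for $\varepsilon$ and $\tilde\xi\neq 0$ sufficiently small, $\mathrm{Re}\,\lambda_*^\varepsilon(\tilde\xi)=0$ if and only if $\varepsilon=\mathcal E(\tilde\xi)$. Moreover, in the generic case $\mathrm{Re}\,\delta(0)\ne0$, $$\mathcal E(\tilde\xi)\sim\frac{\mathrm{Re}\,\delta(0)}{\partial_\varepsilon\mathrm{Re}\,\beta(0)}\,\tilde\xi\quad\text{as }\tilde\xi\to0.$$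
   Context: Setting: a smooth family of systems $u_t=\Delta_xu-\sum_{j=1}^2F^j(\varepsilon,u)_{x_j}$, $u\in\mathbb R^n$, $x\in\mathbb R^2$, with standing planar viscous shocks $\bar u^\varepsilon(x_1)\to u_\pm(\varepsilon)$ solving $u'=F^1(\varepsilon,u)-F^1(\varepsilon,u_-)$; $A^j_\pm:=\partial_uF^j(\varepsilon,u_\pm)$. (H0): $F^j\in C^k$, $k\ge2$. (H1): $A^1_\pm$ have real distinct nonzero eigenvalues and $\xi_1A^1_\pm+\xi_2A^2_\pm$ is real-semisimple for $\xi\in\mathbb R^2$. (H2): $\bar u^\varepsilon$ is a transverse connecting orbit of the profile ODE, unique up to translation, with $\dim S(A^1_+)+\dim U(A^1_-)=n+1$ (so $A^1_-$ has $c-1$ negative, $A^1_+$ has $n-c$ positive eigenvalues). Lopatinski determinant: $\Delta^\varepsilon(\tilde\xi,\lambda):=\det(\mathcal R_1^-,\dots,\mathcal R_{c-1}^-,\mathcal R_{c+1}^+,\dots,\mathcal R_n^+,\lambda[u]+i\tilde\xi[F^2])$, where $[u]=u_+-u_-$, $[F^2]=F^2(\varepsilon,u_+)-F^2(\varepsilon,u_-)$, and $\{\mathcal R^+_i\}$, $\{\mathcal R^-_i\}$ are bases of the unstable subspace of $\mathcal A_+$, resp. the stable subspace of $\mathcal A_-$, with $\mathcal A_\pm(\tilde\xi,\lambda)=(\lambda I+i\tilde\xi A^2_\pm)(A^1_\pm)^{-1}$; it is homogeneous of degree one and analytic away from finitely many branch singularities. Evans function: $D(\tilde\xi,\lambda)$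 is the determinant, at $x_1=0$, of bases of solutions decaying at $-\infty$ and at $+\infty$ of the first-order form of the eigenvalue ODE $w''-(A^1(x_1)w)'-i\tilde\xi A^2(x_1)w-\tilde\xi^2w=\lambda w$, $A^j(x_1)=\partial_uF^j(\varepsilon,\bar u^\varepsilon(x_1))$, chosen analytically in $\lambda$; its zeros with $\mathrm{Re}\,\lambda\ge0$ are the eigenvalues of the linearized operator on the Fourier mode $e^{i\tilde\xi x_2}$. In polar coordinates $D(\rho\tilde\xi_0,\rho\lambda_0)$ it satisfies $D|_{\rho=0}=0$, $\partial_\rho D|_{\rho=0}=\gamma\Delta(\tilde\xi_0,\lambda_0)$ ($\gamma\ne0$ a transversality constant). (B1): for $\varepsilon$ small, $\Delta^\varepsilon(1,\lambda)$ has no roots with $\mathrm{Re}\,\lambda\ge0$ except a single simple purely imaginary root $\lambda=i\tau_*(\varepsilon)\ne0$, lying away from the singularities of $\Delta^\varepsilon$. Refined stability coefficient: $\beta(\varepsilon):=-D_{\rho\rho}/D_{\rho\lambda}|_{\rho=0}$ evaluated at $(\tilde\xi_0,\lambda_0)=(1,i\tau_*(\varepsilon))$. (B2): $\mathrm{Re}\,\beta(0)=0$ and $\partial_\varepsilon\mathrm{Re}\,\beta(0)<0$. Known fact (used as given): under (H0)–(H2) and (B1), for $\varepsilon,\tilde\xi$ small there is a smooth family of roots $(\tilde\xi,\lambda_*^\varepsilon(\tilde\xi))$ of $D$ with $\lambda_*^\varepsilon(\tilde\xi)=i\tilde\xi\tau_*(\varepsilon)-\tilde\xi^2\beta(\varepsilon)+\delta(\varepsilon)\tilde\xi^3+r(\varepsilon,\tilde\xi)\tilde\xi^4$,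 $r\in C^1$; this defines $\delta(\varepsilon)$. *)

theory Defs
  imports "HOL-Analysis.Analysis" "HOL-Library.Landau_Symbols"
begin

definition C1_on :: "'a::real_normed_vector set \<Rightarrow> ('a \<Rightarrow> 'b::real_normed_vector) \<Rightarrow> bool" where
  "C1_on S f \<longleftrightarrow> (\<exists>f'. (\<forall>x\<in>S. (f has_derivative blinfun_apply (f' x)) (at x)) \<and> continuous_on S f')"

definition neutral_curve :: "(real \<Rightarrow> real \<Rightarrow> complex) \<Rightarrow> (real \<Rightarrow> real) \<Rightarrow> bool" where
  "neutral_curve lam E \<longleftrightarrow>
     (\<exists>\<rho>>0. C1_on (ball 0 \<rho>) E) \<and> E 0 = 0 \<and>
     (\<exists>\<eta>>0. \<forall>\<epsilon> \<xi>. \<bar>\<epsilon>\<bar> < \<eta> \<longrightarrow> 0 < \<bar>\<xi>\<bar> \<longrightarrow> \<bar>\<xi>\<bar> < \<eta> \<longrightarrow>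
        (Re (lam \<epsilon> \<xi>) = 0 \<longleftrightarrow> \<epsilon> = E \<xi>))"

end

theory Submission
  imports Defs
begin

(* Substituting the expansion gives Re lam(eps, xi) = xi^2 g(eps, xi) with
   g(eps, xi) = - Re beta(eps) + xi Re delta(eps) + xi^2 Re r(eps, xi) (reduced_growth_rate), so for xi <> 0 the
   neutral condition is g = 0.  By (B2), g(0, 0) = 0 and d/d eps g(0, 0) = - (Re beta)'(0) > 0,
   so the implicit function theorem solves g = 0 by a C^1 curve eps = E(xi), with
   E'(0) = - (d/d xi g) / (d/d eps g) at the origin = Re delta(0) / (Re beta)'(0); this gives the
   asymptotics.  Any other neutral curve is continuous with value 0 at 0, hence stays in the
   window where the zero set of g is the graph of E. *)

lemma MVT_closed_segment_real:
  fixes f f' :: "real \<Rightarrow> real"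
  assumes "\<And>t. t \<in> closed_segment a b \<Longrightarrow> (f has_real_derivative f' t) (at t)"
  shows "\<exists>p\<in>closed_segment a b. f b - f a = (b - a) * f' p"
proof (cases a b rule: linorder_cases)
  case less
  then obtain p where "a < p" "p < b" "f b - f a = (b - a) * f' p"
    using MVT2[of a b f f'] assms by (auto simp: closed_segment_eq_real_ivl)
  then show ?thesis using less by (auto simp: closed_segment_eq_real_ivl)
next
  case equal
  then show ?thesis by auto
next
  case greater
  then obtain p where "b < p" "p < a" "f a - f b = (a - b) * f' p"
    using MVT2[of b a f f'] assms by (auto simp: closed_segment_eq_real_ivl)
  then show ?thesis using greater
    by (auto simp: closed_segment_eq_real_ivl algebra_simps intro!: bexI[of _ p])
qed

lemma abs_less_closed_segment:
  fixes a b p k :: real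
  shows "p \<in> closed_segment a b \<Longrightarrow> \<bar>a\<bar> < k \<Longrightarrow> \<bar>b\<bar> < k \<Longrightarrow> \<bar>p\<bar> < k"
  by (auto simp: closed_segment_eq_real_ivl split: if_splits)

lemma eventually_abs_add_less:
  fixes x r :: real
  assumes "\<bar>x\<bar> < r"
  shows "\<forall>\<^sub>F h in at 0. \<bar>x + h\<bar> < r"
  unfolding eventually_at
  using assms by (intro exI[of _ "r - \<bar>x\<bar>"]) (auto simp: dist_real_def)

lemma C1_onI_real_derivative:
  fixes f D :: "real \<Rightarrow> real"
  assumes "open S" "\<And>x. x \<in> S \<Longrightarrow> (f has_real_derivative D x) (at x)"
    and "\<And>x. x \<in> S \<Longrightarrow> isCont D x"
  shows "C1_on S f"
  unfolding C1_on_def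
proof (intro exI[of _ "\<lambda>x. blinfun_mult_right (D x)"] conjI ballI)
  fix x assume "x \<in> S"
  then show "(f has_derivative blinfun_apply (blinfun_mult_right (D x))) (at x)"
    using assms(2) by (simp add: has_field_derivative_def)
next
  have "continuous_on S D"
    using assms(1,3) continuous_on_eq_continuous_at by blast
  then show "continuous_on S (\<lambda>x. blinfun_mult_right (D x))"
    by (rule bounded_linear.continuous_on[OF bounded_linear_blinfun_mult_right])
qed

lemma C1_on_imp_isCont:
  assumes "C1_on S f" "x \<in> S"
  shows "isCont f x"
  using assms has_derivative_continuous unfolding C1_on_def by blast

locale implicit_square =
  fixes g gE gX :: "real \<times> real \<Rightarrow> real" and k c M :: real
  assumes k_pos: "0 < k" and c_pos: "0 < c"
    and has_partial1: "\<And>e x. \<bar>e\<bar> < k \<Longrightarrow> \<bar>x\<bar> < k \<Longrightarrow>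
          ((\<lambda>t. g (t, x)) has_real_derivative gE (e, x)) (at e)"
    and has_partial2: "\<And>e x. \<bar>e\<bar> < k \<Longrightarrow> \<bar>x\<bar> < k \<Longrightarrow>
          ((\<lambda>t. g (e, t)) has_real_derivative gX (e, x)) (at x)"
    and partial1_ge: "\<And>e x. \<bar>e\<bar> < k \<Longrightarrow> \<bar>x\<bar> < k \<Longrightarrow> c \<le> gE (e, x)"
    and partial2_bound: "\<And>e x. \<bar>e\<bar> < k \<Longrightarrow> \<bar>x\<bar> < k \<Longrightarrow> \<bar>gX (e, x)\<bar> \<le> M"
    and g_origin: "g (0, 0) = 0"
begin

lemma M_nonneg: "0 \<le> M"
  using partial2_bound[of 0 0] k_pos by linarith

lemma increment_partial1_ge:
  assumes "\<bar>e1\<bar> < k" "\<bar>e2\<bar> < k" "\<bar>x\<bar> < k" "e1 \<le> e2"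
  shows "c * (e2 - e1) \<le> g (e2, x) - g (e1, x)"
proof -
  obtain p where p: "p \<in> closed_segment e1 e2"
    and eq: "g (e2, x) - g (e1, x) = (e2 - e1) * gE (p, x)"
    using MVT_closed_segment_real[of e1 e2 "\<lambda>t. g (t, x)" "\<lambda>t. gE (t, x)"]
      has_partial1 abs_less_closed_segment assms by blast
  have "c \<le> gE (p, x)"
    using partial1_ge abs_less_closed_segment[OF p] assms by blast
  then show ?thesis
    unfolding eq using mult_right_mono[of c "gE (p, x)" "e2 - e1"] assms(4) by (simp add: mult.commute)
qed

lemma increment_partial2_le:
  assumes "\<bar>e\<bar> < k" "\<bar>x1\<bar> < k" "\<bar>x2\<bar> < k"
  shows "\<bar>g (e, x2) - g (e, x1)\<bar> \<le> M * \<bar>x2 - x1\<bar>"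
proof -
  obtain p where p: "p \<in> closed_segment x1 x2"
    and eq: "g (e, x2) - g (e, x1) = (x2 - x1) * gX (e, p)"
    using MVT_closed_segment_real[of x1 x2 "\<lambda>t. g (e, t)" "\<lambda>t. gX (e, t)"]
      has_partial2 abs_less_closed_segment assms by blast
  have "\<bar>gX (e, p)\<bar> \<le> M"
    using partial2_bound abs_less_closed_segment[OF p] assms by blast
  then show ?thesis
    unfolding eq abs_mult using mult_right_mono[of "\<bar>gX (e, p)\<bar>" M "\<bar>x2 - x1\<bar>"]
    by (simp add: mult.commute)
qed

lemma zero_unique:
  assumes "\<bar>e1\<bar> < k" "\<bar>e2\<bar> < k" "\<bar>x\<bar> < k" "g (e1, x) = 0" "g (e2, x) = 0"
  shows "e1 = e2"
  using increment_partial1_ge[of e1 e2 x] increment_partial1_ge[of e2 e1 x] assms c_pos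
  by (smt (verit) mult_pos_pos)

(* Small enough that M |x| < c k/2, so g(k/2, x) > 0 > g(-k/2, x). *)
definition radius :: real where
  "radius = min k (c * k / (2 * (M + 1)))"

lemma radius_pos: "0 < radius"
  using k_pos c_pos M_nonneg by (simp add: radius_def)

lemma radius_le: "radius \<le> k"
  by (simp add: radius_def)

lemma zero_exists:
  assumes x: "\<bar>x\<bar> < radius"
  shows "\<exists>e. \<bar>e\<bar> < k \<and> g (e, x) = 0"
proof -
  define a where "a = k / 2"
  have a: "0 < a" "a < k" using k_pos by (auto simp: a_def)
  have "\<bar>x\<bar> * (M + 1) < c * a"
    using x M_nonneg by (simp add: radius_def a_def less_divide_eq algebra_simps)
  then have Mx: "M * \<bar>x\<bar> < c * a"
    using M_nonneg by (simp add: algebra_simps)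
  have x_k: "\<bar>x\<bar> < k" using x radius_le by linarith
  have "c * a \<le> g (a, 0)" "c * a \<le> - g (-a, 0)"
    using increment_partial1_ge[of 0 a 0] increment_partial1_ge[of "-a" 0 0] a g_origin by auto
  moreover have "\<bar>g (a, x) - g (a, 0)\<bar> \<le> M * \<bar>x\<bar>" "\<bar>g (-a, x) - g (-a, 0)\<bar> \<le> M * \<bar>x\<bar>"
    using increment_partial2_le[of a 0 x] increment_partial2_le[of "-a" 0 x] a x_k by auto
  ultimately have signs: "g (-a, x) < 0" "0 < g (a, x)"
    using Mx by linarith+
  have "continuous_on {-a..a} (\<lambda>t. g (t, x))"
  proof (intro continuous_at_imp_continuous_on ballI)
    fix t assume "t \<in> {-a..a}"
    then have "\<bar>t\<bar> < k" using a by auto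
    then show "isCont (\<lambda>t. g (t, x)) t" using has_partial1 x_k DERIV_isCont by blast
  qed
  then obtain e where "-a \<le> e" "e \<le> a" "g (e, x) = 0"
    using IVT'[of "\<lambda>t. g (t, x)" "-a" 0 a] signs a by auto
  then show ?thesis using a by (intro exI[of _ e]) auto
qed

definition implicit_fun :: "real \<Rightarrow> real" where
  "implicit_fun x = (THE e. \<bar>e\<bar> < k \<and> g (e, x) = 0)"

lemma implicit_fun:
  assumes "\<bar>x\<bar> < radius"
  shows "\<bar>implicit_fun x\<bar> < k" "g (implicit_fun x, x) = 0"
proof -
  have "\<exists>!e. \<bar>e\<bar> < k \<and> g (e, x) = 0"
    using zero_exists[OF assms] zero_unique[of _ _ x] assms radius_le by (metis order_less_le_trans)
  then show "\<bar>implicit_fun x\<bar> < k" "g (implicit_fun x, x) = 0"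
    unfolding implicit_fun_def by (metis (mono_tags, lifting) theI')+
qed

lemma implicit_fun_unique:
  assumes "\<bar>e\<bar> < k" "\<bar>x\<bar> < radius" "g (e, x) = 0"
  shows "e = implicit_fun x"
  using zero_unique[of e "implicit_fun x" x] implicit_fun[of x] assms radius_le by auto

lemma implicit_fun_lipschitz:
  assumes "\<bar>x1\<bar> < radius" "\<bar>x2\<bar> < radius"
  shows "c * \<bar>implicit_fun x2 - implicit_fun x1\<bar> \<le> M * \<bar>x2 - x1\<bar>"
proof -
  let ?e1 = "implicit_fun x1" and ?e2 = "implicit_fun x2"
  have in_square: "\<bar>?e1\<bar> < k" "\<bar>?e2\<bar> < k" "\<bar>x1\<bar> < k" "\<bar>x2\<bar> < k"
    using implicit_fun(1) assms radius_le by (auto simp del: implicit_fun_def)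
  have "c * \<bar>?e2 - ?e1\<bar> \<le> \<bar>g (?e2, x1) - g (?e1, x1)\<bar>"
    using increment_partial1_ge[of ?e1 ?e2 x1] increment_partial1_ge[of ?e2 ?e1 x1] in_square
    by (cases "?e1 \<le> ?e2") auto
  also have "\<dots> = \<bar>g (?e2, x2) - g (?e2, x1)\<bar>"
    using implicit_fun assms by simp
  also have "\<dots> \<le> M * \<bar>x2 - x1\<bar>"
    using increment_partial2_le in_square by blast
  finally show ?thesis .
qed

lemma isCont_implicit_fun:
  assumes "\<bar>x\<bar> < radius"
  shows "isCont implicit_fun x"
proof -
  have "((\<lambda>h. M / c * h) \<longlongrightarrow> 0) (at 0)"
    using c_pos by (auto intro!: tendsto_eq_intros)
  moreover have "\<forall>\<^sub>F h in at 0. dist (implicit_fun (x + h)) (implicit_fun x) \<le> dist (M / c * h) 0"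
    using eventually_abs_add_less[OF assms]
  proof eventually_elim
    case (elim h)
    have "c * \<bar>implicit_fun (x + h) - implicit_fun x\<bar> \<le> M * \<bar>h\<bar>"
      using implicit_fun_lipschitz[OF assms elim] by simp
    then show ?case
      using c_pos M_nonneg by (simp add: dist_real_def abs_mult field_simps)
  qed
  ultimately have "((\<lambda>h. implicit_fun (x + h)) \<longlongrightarrow> implicit_fun x) (at 0)"
    by (rule metric_tendsto_imp_tendsto)
  then show ?thesis
    by (simp add: isCont_def LIM_offset_zero_iff)
qed

(* Split g(E(x+h), x+h) - g(E x, x) = 0 at the corner (E x, x+h); apply the MVT on each leg. *)
lemma implicit_fun_difference_quotient:
  assumes x: "\<bar>x\<bar> < radius" and xh: "\<bar>x + h\<bar> < radius" and "h \<noteq> 0"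
  shows "\<exists>p\<in>closed_segment (implicit_fun x) (implicit_fun (x + h)). \<exists>q\<in>closed_segment x (x + h).
           (implicit_fun (x + h) - implicit_fun x) / h = - gX (implicit_fun x, q) / gE (p, x + h)"
proof -
  let ?e = "implicit_fun x" and ?e' = "implicit_fun (x + h)"
  have in_square: "\<bar>?e\<bar> < k" "\<bar>?e'\<bar> < k" "\<bar>x\<bar> < k" "\<bar>x + h\<bar> < k"
    using implicit_fun(1) x xh radius_le by (auto simp del: implicit_fun_def)
  obtain p where p: "p \<in> closed_segment ?e ?e'"
    and step1: "g (?e', x + h) - g (?e, x + h) = (?e' - ?e) * gE (p, x + h)"
    using MVT_closed_segment_real[of ?e ?e' "\<lambda>t. g (t, x + h)" "\<lambda>t. gE (t, x + h)"]
      has_partial1 abs_less_closed_segment in_square by blast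
  obtain q where q: "q \<in> closed_segment x (x + h)"
    and step2: "g (?e, x + h) - g (?e, x) = h * gX (?e, q)"
    using MVT_closed_segment_real[of x "x + h" "\<lambda>t. g (?e, t)" "\<lambda>t. gX (?e, t)"]
      has_partial2 abs_less_closed_segment in_square by fastforce
  have "0 < gE (p, x + h)"
    using partial1_ge[of p "x + h"] abs_less_closed_segment[OF p] in_square c_pos by fastforce
  moreover have "(?e' - ?e) * gE (p, x + h) + h * gX (?e, q) = 0"
    using step1 step2 implicit_fun(2) x xh by simp
  ultimately have "(?e' - ?e) / h = - gX (?e, q) / gE (p, x + h)"
    using \<open>h \<noteq> 0\<close> by (simp add: field_simps)
  then show ?thesis using p q by blast
qed

lemma implicit_fun_has_derivative:
  assumes cont1: "\<And>e x. \<bar>e\<bar> < k \<Longrightarrow> \<bar>x\<bar> < k \<Longrightarrow> isCont gE (e, x)"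
    and cont2: "\<And>e x. \<bar>e\<bar> < k \<Longrightarrow> \<bar>x\<bar> < k \<Longrightarrow> isCont gX (e, x)"
    and x: "\<bar>x\<bar> < radius"
  shows "(implicit_fun has_real_derivative
            - gX (implicit_fun x, x) / gE (implicit_fun x, x)) (at x)"
proof -
  let ?e = "implicit_fun x"
  have "\<forall>\<^sub>F h in at 0. \<bar>x + h\<bar> < radius \<and> h \<noteq> 0"
    using eventually_abs_add_less[OF x] eventually_neq_at_within[of 0 0 UNIV]
    by (simp add: eventually_conj_iff)
  then have "\<forall>\<^sub>F h in at 0. \<exists>p q. p \<in> closed_segment ?e (implicit_fun (x + h))
      \<and> q \<in> closed_segment x (x + h)
      \<and> (implicit_fun (x + h) - ?e) / h = - gX (?e, q) / gE (p, x + h)"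
    by eventually_elim (use implicit_fun_difference_quotient x in blast)
  then obtain P Q where PQ: "\<forall>\<^sub>F h in at 0. P h \<in> closed_segment ?e (implicit_fun (x + h))
      \<and> Q h \<in> closed_segment x (x + h)
      \<and> (implicit_fun (x + h) - ?e) / h = - gX (?e, Q h) / gE (P h, x + h)"
    unfolding eventually_ex by blast
  have "((\<lambda>h. implicit_fun (x + h)) \<longlongrightarrow> ?e) (at 0)"
    using isCont_implicit_fun[OF x] by (simp add: isCont_def LIM_offset_zero_iff)
  moreover have "\<forall>\<^sub>F h in at 0. dist (P h) ?e \<le> dist (implicit_fun (x + h)) ?e"
    using PQ by eventually_elim (metis dist_commute dist_in_closed_segment)
  ultimately have P_lim: "(P \<longlongrightarrow> ?e) (at 0)"
    by (rule metric_tendsto_imp_tendsto)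
  have shift_lim: "((\<lambda>h. x + h) \<longlongrightarrow> x) (at 0)"
    by (auto intro!: tendsto_eq_intros)
  moreover have "\<forall>\<^sub>F h in at 0. dist (Q h) x \<le> dist (x + h) x"
    using PQ by eventually_elim (metis dist_commute dist_in_closed_segment)
  ultimately have Q_lim: "(Q \<longlongrightarrow> x) (at 0)"
    by (rule metric_tendsto_imp_tendsto)
  have in_square: "\<bar>?e\<bar> < k" "\<bar>x\<bar> < k"
    using implicit_fun(1) x radius_le by (auto simp del: implicit_fun_def)
  have "0 < gE (?e, x)"
    using partial1_ge[OF in_square] c_pos by linarith
  then have "((\<lambda>h. - gX (?e, Q h) / gE (P h, x + h)) \<longlongrightarrow> - gX (?e, x) / gE (?e, x)) (at 0)"
    using cont1[OF in_square] cont2[OF in_square] P_lim Q_lim shift_lim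
    by (auto intro!: tendsto_intros isCont_tendsto_compose[where g = gE]
        isCont_tendsto_compose[where g = gX] tendsto_Pair)
  then have "((\<lambda>h. (implicit_fun (x + h) - ?e) / h) \<longlongrightarrow> - gX (?e, x) / gE (?e, x)) (at 0)"
    by (rule Lim_transform_eventually) (use PQ in \<open>auto elim: eventually_mono\<close>)
  then show ?thesis
    unfolding DERIV_def .
qed


lemma implicit_fun_origin: "implicit_fun 0 = 0"
  using implicit_fun_unique[of 0 0] k_pos radius_pos g_origin by simp

lemma C1_on_implicit_fun:
  assumes cont1: "\<And>e x. \<bar>e\<bar> < k \<Longrightarrow> \<bar>x\<bar> < k \<Longrightarrow> isCont gE (e, x)"
    and cont2: "\<And>e x. \<bar>e\<bar> < k \<Longrightarrow> \<bar>x\<bar> < k \<Longrightarrow> isCont gX (e, x)"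
  shows "C1_on (ball 0 radius) implicit_fun"
proof (rule C1_onI_real_derivative[OF open_ball])
  fix x :: real assume "x \<in> ball 0 radius"
  then have x: "\<bar>x\<bar> < radius" by simp
  show "(implicit_fun has_real_derivative
          - gX (implicit_fun x, x) / gE (implicit_fun x, x)) (at x)"
    using implicit_fun_has_derivative[OF cont1 cont2 x] .
  have in_square: "\<bar>implicit_fun x\<bar> < k" "\<bar>x\<bar> < k"
    using implicit_fun(1)[OF x] x radius_le by (auto simp del: implicit_fun_def)
  have graph: "isCont (\<lambda>y. (implicit_fun y, y)) x"
    using isCont_implicit_fun[OF x] by (intro continuous_intros)
  have "gE (implicit_fun x, x) \<noteq> 0"
    using partial1_ge[OF in_square] c_pos by linarith
  then show "isCont (\<lambda>y. - gX (implicit_fun y, y) / gE (implicit_fun y, y)) x"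
    using isCont_o2[OF graph cont1[OF in_square]] isCont_o2[OF graph cont2[OF in_square]]
    by (auto intro!: continuous_intros)
qed

end

lemma isCont_square_bound:
  fixes f :: "real \<times> real \<Rightarrow> real"
  assumes "isCont f (0, 0)" "0 < \<epsilon>"
  obtains k where "0 < k" "\<And>e x. \<bar>e\<bar> < k \<Longrightarrow> \<bar>x\<bar> < k \<Longrightarrow> \<bar>f (e, x) - f (0, 0)\<bar> < \<epsilon>"
proof -
  obtain d where d: "0 < d" "\<And>z. dist z (0, 0) < d \<Longrightarrow> dist (f z) (f (0, 0)) < \<epsilon>"
    using assms unfolding continuous_at_eps_delta by blast
  have "dist (e, x) (0, 0) < d" if "\<bar>e\<bar> < d / 2" "\<bar>x\<bar> < d / 2" for e x
    using norm_Pair_le[of e x] that by (simp add: dist_norm)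
  then show ?thesis
    using d by (intro that[of "d / 2"]) (auto simp: dist_real_def)
qed

theorem implicit_function_plane:
  fixes g gE gX :: "real \<times> real \<Rightarrow> real"
  assumes "0 < \<kappa>"
    and has_partial1: "\<And>e x. \<bar>e\<bar> < \<kappa> \<Longrightarrow> \<bar>x\<bar> < \<kappa> \<Longrightarrow>
          ((\<lambda>t. g (t, x)) has_real_derivative gE (e, x)) (at e)"
    and has_partial2: "\<And>e x. \<bar>e\<bar> < \<kappa> \<Longrightarrow> \<bar>x\<bar> < \<kappa> \<Longrightarrow>
          ((\<lambda>t. g (e, t)) has_real_derivative gX (e, x)) (at x)"
    and cont1: "\<And>e x. \<bar>e\<bar> < \<kappa> \<Longrightarrow> \<bar>x\<bar> < \<kappa> \<Longrightarrow> isCont gE (e, x)"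
    and cont2: "\<And>e x. \<bar>e\<bar> < \<kappa> \<Longrightarrow> \<bar>x\<bar> < \<kappa> \<Longrightarrow> isCont gX (e, x)"
    and "g (0, 0) = 0" and "0 < gE (0, 0)"
  obtains \<sigma> E where "0 < \<sigma>" "C1_on (ball 0 \<sigma>) E" "E 0 = 0"
    "(E has_real_derivative - gX (0, 0) / gE (0, 0)) (at 0)"
    "\<And>e x. \<bar>e\<bar> < \<sigma> \<Longrightarrow> \<bar>x\<bar> < \<sigma> \<Longrightarrow> g (e, x) = 0 \<longleftrightarrow> e = E x"
proof -
  obtain k1 where k1: "0 < k1"
    "\<And>e x. \<bar>e\<bar> < k1 \<Longrightarrow> \<bar>x\<bar> < k1 \<Longrightarrow> \<bar>gE (e, x) - gE (0, 0)\<bar> < gE (0, 0) / 2"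
    using isCont_square_bound[OF cont1 half_gt_zero] \<open>0 < \<kappa>\<close> \<open>0 < gE (0, 0)\<close> by auto
  obtain k2 where k2: "0 < k2"
    "\<And>e x. \<bar>e\<bar> < k2 \<Longrightarrow> \<bar>x\<bar> < k2 \<Longrightarrow> \<bar>gX (e, x) - gX (0, 0)\<bar> < 1"
    using isCont_square_bound[OF cont2 zero_less_one] \<open>0 < \<kappa>\<close> by auto
  define k where "k = min \<kappa> (min k1 k2)"
  interpret implicit_square g gE gX k "gE (0, 0) / 2" "\<bar>gX (0, 0)\<bar> + 1"
  proof
    fix e x assume "\<bar>e\<bar> < k" "\<bar>x\<bar> < k"
    then have bounds: "\<bar>e\<bar> < \<kappa>" "\<bar>x\<bar> < \<kappa>" "\<bar>e\<bar> < k1" "\<bar>x\<bar> < k1" "\<bar>e\<bar> < k2" "\<bar>x\<bar> < k2"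
      by (auto simp: k_def)
    then show "((\<lambda>t. g (t, x)) has_real_derivative gE (e, x)) (at e)"
      "((\<lambda>t. g (e, t)) has_real_derivative gX (e, x)) (at x)"
      using has_partial1 has_partial2 bounds by auto
    show "gE (0, 0) / 2 \<le> gE (e, x)" "\<bar>gX (e, x)\<bar> \<le> \<bar>gX (0, 0)\<bar> + 1"
      using k1(2)[of e x] k2(2)[of e x] bounds unfolding abs_diff_less_iff by linarith+
  qed (use \<open>0 < \<kappa>\<close> k1 k2 \<open>g (0, 0) = 0\<close> \<open>0 < gE (0, 0)\<close> in \<open>auto simp: k_def\<close>)
  have "k \<le> \<kappa>" by (simp add: k_def)
  show ?thesis
  proof (rule that[of radius implicit_fun, OF radius_pos _ implicit_fun_origin])
    show "C1_on (ball 0 radius) implicit_fun"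
      using C1_on_implicit_fun cont1 cont2 \<open>k \<le> \<kappa>\<close> by simp
    show "(implicit_fun has_real_derivative - gX (0, 0) / gE (0, 0)) (at 0)"
      using implicit_fun_has_derivative[of 0] cont1 cont2 \<open>k \<le> \<kappa>\<close> radius_pos implicit_fun_origin
      by simp
    show "g (e, x) = 0 \<longleftrightarrow> e = implicit_fun x" if "\<bar>e\<bar> < radius" "\<bar>x\<bar> < radius" for e x
      using implicit_fun_unique[of e x] implicit_fun(2)[of x] that radius_le by auto
  qed
qed

lemma Re_blinfun_scaleR:
  fixes F :: "'a::real_normed_vector \<Rightarrow>\<^sub>L complex"
  shows "Re (F (h *\<^sub>R v)) = h * Re (F v)"
  using blinfun.scaleR_right[of F h v] by simp

lemma has_real_derivative_Re_line:
  fixes f :: "'a::real_normed_vector \<Rightarrow> complex"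
  assumes "(f has_derivative blinfun_apply F) (at (a + s *\<^sub>R v))"
  shows "((\<lambda>u. Re (f (a + u *\<^sub>R v))) has_real_derivative Re (F v)) (at s)"
proof -
  have "((\<lambda>u. a + u *\<^sub>R v) has_derivative (\<lambda>h. h *\<^sub>R v)) (at s)"
    by (auto intro!: derivative_eq_intros)
  from has_derivative_Re[OF has_derivative_compose[OF this assms]]
  have "((\<lambda>u. Re (f (a + u *\<^sub>R v))) has_derivative (\<lambda>h. h * Re (F v))) (at s)"
    by (simp only: Re_blinfun_scaleR)
  moreover have "(\<lambda>h. h * Re (F v)) = (*) (Re (F v))"
    by (auto simp: fun_eq_iff)
  ultimately show ?thesis
    by (simp only: has_field_derivative_def)
qed

lemma C1_on_Re_derivative:
  fixes f :: "real \<Rightarrow> complex"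
  assumes "C1_on S f"
  obtains f' where "\<And>t. t \<in> S \<Longrightarrow> ((\<lambda>t. Re (f t)) has_real_derivative f' t) (at t)"
    "continuous_on S f'"
proof -
  obtain F where F: "\<And>t. t \<in> S \<Longrightarrow> (f has_derivative blinfun_apply (F t)) (at t)"
    "continuous_on S F"
    using assms unfolding C1_on_def by blast
  have "((\<lambda>t. Re (f t)) has_real_derivative Re (F t 1)) (at t)" if "t \<in> S" for t
    using has_real_derivative_Re_line[of f "F t" 0 t 1] F(1)[OF that] by simp
  moreover have "continuous_on S (\<lambda>t. Re (F t 1))"
    using F(2) by (intro continuous_intros)
  ultimately show ?thesis
    by (rule that)
qed

lemma C1_on_Re_partials:
  fixes f :: "real \<times> real \<Rightarrow> complex"
  assumes "C1_on S f"
  obtains f1 f2 where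
    "\<And>s t. (s, t) \<in> S \<Longrightarrow> ((\<lambda>u. Re (f (u, t))) has_real_derivative f1 (s, t)) (at s)"
    "\<And>s t. (s, t) \<in> S \<Longrightarrow> ((\<lambda>u. Re (f (s, u))) has_real_derivative f2 (s, t)) (at t)"
    "continuous_on S f1" "continuous_on S f2"
proof -
  obtain F where F: "\<And>z. z \<in> S \<Longrightarrow> (f has_derivative blinfun_apply (F z)) (at z)"
    "continuous_on S F"
    using assms unfolding C1_on_def by blast
  have "((\<lambda>u. Re (f (u, t))) has_real_derivative Re (F (s, t) (1, 0))) (at s)"
    if "(s, t) \<in> S" for s t
    using has_real_derivative_Re_line[of f "F (s, t)" "(0, t)" s "(1, 0)"] F(1)[OF that] by simp
  moreover have "((\<lambda>u. Re (f (s, u))) has_real_derivative Re (F (s, t) (0, 1))) (at t)"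
    if "(s, t) \<in> S" for s t
    using has_real_derivative_Re_line[of f "F (s, t)" "(s, 0)" t "(0, 1)"] F(1)[OF that] by simp
  moreover have "continuous_on S (\<lambda>z. Re (F z (1, 0)))" "continuous_on S (\<lambda>z. Re (F z (0, 1)))"
    using F(2) by (auto intro!: continuous_intros)
  ultimately show ?thesis
    by (rule that)
qed

definition reduced_growth_rate ::
    "(real \<Rightarrow> complex) \<Rightarrow> (real \<Rightarrow> complex) \<Rightarrow> (real \<times> real \<Rightarrow> complex) \<Rightarrow> real \<times> real \<Rightarrow> real" where
  "reduced_growth_rate beta delta r =
     (\<lambda>(\<epsilon>, \<xi>). - Re (beta \<epsilon>) + \<xi> * Re (delta \<epsilon>) + \<xi>^2 * Re (r (\<epsilon>, \<xi>)))"

lemma Re_expansion: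
  "Re (\<i> * complex_of_real (\<xi> * \<tau>) - complex_of_real (\<xi>^2) * b + d * complex_of_real (\<xi>^3)
        + \<rho> * complex_of_real (\<xi>^4)) = \<xi>^2 * (- Re b + \<xi> * Re d + \<xi>^2 * Re \<rho>)"
  by (simp add: algebra_simps power2_eq_square power3_eq_cube power4_eq_xxxx)

lemma reduced_growth_rate_partials:
  fixes beta delta :: "real \<Rightarrow> complex" and r :: "real \<times> real \<Rightarrow> complex"
  defines "g \<equiv> reduced_growth_rate beta delta r"
  assumes "0 < e0" and "C1_on (ball 0 e0) beta" and "C1_on (ball 0 e0) delta"
    and "C1_on (ball (0, 0) e0) r"
  obtains \<kappa> gE gX where "0 < \<kappa>"
    "\<And>e x. \<bar>e\<bar> < \<kappa> \<Longrightarrow> \<bar>x\<bar> < \<kappa> \<Longrightarrow> ((\<lambda>t. g (t, x)) has_real_derivative gE (e, x)) (at e)"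
    "\<And>e x. \<bar>e\<bar> < \<kappa> \<Longrightarrow> \<bar>x\<bar> < \<kappa> \<Longrightarrow> ((\<lambda>t. g (e, t)) has_real_derivative gX (e, x)) (at x)"
    "\<And>e x. \<bar>e\<bar> < \<kappa> \<Longrightarrow> \<bar>x\<bar> < \<kappa> \<Longrightarrow> isCont gE (e, x)"
    "\<And>e x. \<bar>e\<bar> < \<kappa> \<Longrightarrow> \<bar>x\<bar> < \<kappa> \<Longrightarrow> isCont gX (e, x)"
    "gE (0, 0) = - deriv (\<lambda>\<epsilon>. Re (beta \<epsilon>)) 0" "gX (0, 0) = Re (delta 0)"
proof -
  obtain B' where B': "\<And>t. t \<in> ball 0 e0 \<Longrightarrow> ((\<lambda>t. Re (beta t)) has_real_derivative B' t) (at t)"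
    "continuous_on (ball 0 e0) B'"
    using C1_on_Re_derivative assms(3) by blast
  obtain D' where D': "\<And>t. t \<in> ball 0 e0 \<Longrightarrow> ((\<lambda>t. Re (delta t)) has_real_derivative D' t) (at t)"
    "continuous_on (ball 0 e0) D'"
    using C1_on_Re_derivative assms(4) by blast
  obtain R1 R2 where R:
    "\<And>s t. (s, t) \<in> ball (0, 0) e0 \<Longrightarrow> ((\<lambda>u. Re (r (u, t))) has_real_derivative R1 (s, t)) (at s)"
    "\<And>s t. (s, t) \<in> ball (0, 0) e0 \<Longrightarrow> ((\<lambda>u. Re (r (s, u))) has_real_derivative R2 (s, t)) (at t)"
    "continuous_on (ball (0, 0) e0) R1" "continuous_on (ball (0, 0) e0) R2"
    using C1_on_Re_partials assms(5) by blast
  define gE where "gE = (\<lambda>z. - B' (fst z) + snd z * D' (fst z) + (snd z)^2 * R1 z)"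
  define gX where "gX = (\<lambda>z. Re (delta (fst z)) + 2 * snd z * Re (r z) + (snd z)^2 * R2 z)"
  define \<kappa> where "\<kappa> = e0 / 2"
  have in_ball: "e \<in> ball 0 e0" "x \<in> ball 0 e0" "(e, x) \<in> ball (0, 0) e0"
    if "\<bar>e\<bar> < \<kappa>" "\<bar>x\<bar> < \<kappa>" for e x
    using that norm_Pair_le[of "-e" "-x"] by (auto simp: \<kappa>_def dist_norm)
  show ?thesis
  proof (rule that[of \<kappa> gE gX])
    show "0 < \<kappa>" using \<open>0 < e0\<close> by (simp add: \<kappa>_def)
  next
    fix e x assume sq: "\<bar>e\<bar> < \<kappa>" "\<bar>x\<bar> < \<kappa>"
    have "((\<lambda>t. - Re (beta t) + x * Re (delta t) + x^2 * Re (r (t, x))) has_real_derivative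
        - B' e + x * D' e + x^2 * R1 (e, x)) (at e)"
      using B'(1) D'(1) R(1) in_ball[OF sq] by (intro DERIV_add DERIV_minus DERIV_cmult) auto
    then show "((\<lambda>t. g (t, x)) has_real_derivative gE (e, x)) (at e)"
      by (simp add: g_def reduced_growth_rate_def gE_def)
    have "((\<lambda>t. t^2) has_real_derivative 2 * x) (at x)"
      "((\<lambda>t. t * Re (delta e)) has_real_derivative Re (delta e)) (at x)"
      by (auto intro!: derivative_eq_intros)
    then have "((\<lambda>t. - Re (beta e) + t * Re (delta e) + t^2 * Re (r (e, t))) has_real_derivative
        0 + Re (delta e) + (2 * x * Re (r (e, x)) + R2 (e, x) * x^2)) (at x)"
      using R(2) in_ball[OF sq] by (intro DERIV_add DERIV_const DERIV_mult) auto
    then show "((\<lambda>t. g (e, t)) has_real_derivative gX (e, x)) (at x)"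
      by (simp add: g_def reduced_growth_rate_def gX_def algebra_simps)
    have "isCont B' e" "isCont D' e" "isCont R1 (e, x)" "isCont R2 (e, x)"
      using B'(2) D'(2) R(3,4) in_ball[OF sq]
      by (simp_all add: continuous_on_eq_continuous_at)
    moreover have "isCont (\<lambda>t. Re (delta t)) e"
      using D'(1) in_ball[OF sq] DERIV_isCont by blast
    moreover have "isCont r (e, x)"
      using C1_on_imp_isCont[OF assms(5)] in_ball[OF sq] by blast
    ultimately show "isCont gE (e, x)" "isCont gX (e, x)"
      unfolding gE_def gX_def
      by (auto intro!: continuous_intros isCont_o2[OF continuous_fst[OF continuous_ident]])
  next
    show "gE (0, 0) = - deriv (\<lambda>\<epsilon>. Re (beta \<epsilon>)) 0"
      using DERIV_imp_deriv[OF B'(1)] \<open>0 < e0\<close> by (simp add: gE_def)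
    show "gX (0, 0) = Re (delta 0)"
      by (simp add: gX_def)
  qed
qed

lemma reduced_growth_rate_zero_curve:
  fixes beta delta :: "real \<Rightarrow> complex" and r :: "real \<times> real \<Rightarrow> complex"
  assumes "0 < e0" "C1_on (ball 0 e0) beta" "C1_on (ball 0 e0) delta" "C1_on (ball (0, 0) e0) r"
    and "Re (beta 0) = 0" "deriv (\<lambda>\<epsilon>. Re (beta \<epsilon>)) 0 < 0"
  obtains \<sigma> E where "0 < \<sigma>" "C1_on (ball 0 \<sigma>) E" "E 0 = 0"
    "(E has_real_derivative Re (delta 0) / deriv (\<lambda>\<epsilon>. Re (beta \<epsilon>)) 0) (at 0)"
    "\<And>\<epsilon> \<xi>. \<bar>\<epsilon>\<bar> < \<sigma> \<Longrightarrow> \<bar>\<xi>\<bar> < \<sigma> \<Longrightarrow>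
       reduced_growth_rate beta delta r (\<epsilon>, \<xi>) = 0 \<longleftrightarrow> \<epsilon> = E \<xi>"
proof -
  let ?g = "reduced_growth_rate beta delta r"
  obtain \<kappa> gE gX where partials: "0 < \<kappa>"
    "\<And>e x. \<bar>e\<bar> < \<kappa> \<Longrightarrow> \<bar>x\<bar> < \<kappa> \<Longrightarrow> ((\<lambda>t. ?g (t, x)) has_real_derivative gE (e, x)) (at e)"
    "\<And>e x. \<bar>e\<bar> < \<kappa> \<Longrightarrow> \<bar>x\<bar> < \<kappa> \<Longrightarrow> ((\<lambda>t. ?g (e, t)) has_real_derivative gX (e, x)) (at x)"
    "\<And>e x. \<bar>e\<bar> < \<kappa> \<Longrightarrow> \<bar>x\<bar> < \<kappa> \<Longrightarrow> isCont gE (e, x)"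
    "\<And>e x. \<bar>e\<bar> < \<kappa> \<Longrightarrow> \<bar>x\<bar> < \<kappa> \<Longrightarrow> isCont gX (e, x)"
    and at_origin: "gE (0, 0) = - deriv (\<lambda>\<epsilon>. Re (beta \<epsilon>)) 0" "gX (0, 0) = Re (delta 0)"
    using reduced_growth_rate_partials[OF assms(1-4)] by blast
  have "?g (0, 0) = 0" "0 < gE (0, 0)"
    using assms(5,6) at_origin by (simp_all add: reduced_growth_rate_def)
  then show ?thesis
    using implicit_function_plane[OF partials] that at_origin by auto
qed

lemma asymp_equiv_at_0_of_derivative:
  fixes f :: "real \<Rightarrow> real"
  assumes "(f has_real_derivative K) (at 0)" "f 0 = 0" "K \<noteq> 0"
  shows "f \<sim>[at 0] (\<lambda>x. K * x)"
  using assms by (intro asymp_equivI'_const[where g = "\<lambda>x. x"]) (simp_all add: DERIV_def)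

lemma neutral_curve_locally_unique:
  assumes "neutral_curve lam E" "neutral_curve lam E'"
  shows "\<exists>\<sigma>>0. \<forall>\<xi>. \<bar>\<xi>\<bar> < \<sigma> \<longrightarrow> E' \<xi> = E \<xi>"
proof -
  obtain \<rho> \<eta> where "0 < \<rho>" "C1_on (ball 0 \<rho>) E" "E 0 = 0" "0 < \<eta>"
    and zero_set: "\<And>\<epsilon> \<xi>. \<bar>\<epsilon>\<bar> < \<eta> \<Longrightarrow> 0 < \<bar>\<xi>\<bar> \<Longrightarrow> \<bar>\<xi>\<bar> < \<eta> \<Longrightarrow> Re (lam \<epsilon> \<xi>) = 0 \<longleftrightarrow> \<epsilon> = E \<xi>"
    using assms(1) unfolding neutral_curve_def by blast
  obtain \<rho>' \<eta>' where "0 < \<rho>'" "C1_on (ball 0 \<rho>') E'" "E' 0 = 0" "0 < \<eta>'"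
    and zero_set': "\<And>\<epsilon> \<xi>. \<bar>\<epsilon>\<bar> < \<eta>' \<Longrightarrow> 0 < \<bar>\<xi>\<bar> \<Longrightarrow> \<bar>\<xi>\<bar> < \<eta>' \<Longrightarrow> Re (lam \<epsilon> \<xi>) = 0 \<longleftrightarrow> \<epsilon> = E' \<xi>"
    using assms(2) unfolding neutral_curve_def by blast
  define m where "m = min \<eta> \<eta>'"
  have "0 < m" using \<open>0 < \<eta>\<close> \<open>0 < \<eta>'\<close> by (simp add: m_def)
  have "isCont E 0" "isCont E' 0"
    using C1_on_imp_isCont[OF \<open>C1_on (ball 0 \<rho>) E\<close>] C1_on_imp_isCont[OF \<open>C1_on (ball 0 \<rho>') E'\<close>]
      \<open>0 < \<rho>\<close> \<open>0 < \<rho>'\<close> by simp_all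
  then have "((\<lambda>\<xi>. \<bar>E \<xi>\<bar>) \<longlongrightarrow> 0) (at 0)" "((\<lambda>\<xi>. \<bar>E' \<xi>\<bar>) \<longlongrightarrow> 0) (at 0)"
    "((\<lambda>\<xi>. \<bar>\<xi>\<bar>) \<longlongrightarrow> 0) (at (0::real))"
    using \<open>E 0 = 0\<close> \<open>E' 0 = 0\<close> by (auto simp: isCont_def intro!: tendsto_eq_intros)
  then have "\<forall>\<^sub>F \<xi> in at 0. \<bar>E \<xi>\<bar> < m \<and> \<bar>E' \<xi>\<bar> < m \<and> \<bar>\<xi>\<bar> < m"
    using \<open>0 < m\<close> by (auto intro!: eventually_conj order_tendstoD(2))
  moreover have "\<forall>\<^sub>F \<xi> in at 0. \<xi> \<noteq> (0::real)"
    by (rule eventually_neq_at_within)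
  ultimately have "\<forall>\<^sub>F \<xi> in at 0. E' \<xi> = E \<xi>"
  proof eventually_elim
    case (elim \<xi>)
    then have "Re (lam (E' \<xi>) \<xi>) = 0"
      using zero_set' by (simp add: m_def)
    then show ?case
      using zero_set elim by (simp add: m_def)
  qed
  then obtain d where "0 < d" and near: "\<And>\<xi>. \<xi> \<noteq> 0 \<Longrightarrow> dist \<xi> 0 < d \<Longrightarrow> E' \<xi> = E \<xi>"
    unfolding eventually_at by blast
  have "E' \<xi> = E \<xi>" if "\<bar>\<xi>\<bar> < d" for \<xi>
    using near[of \<xi>] that \<open>E 0 = 0\<close> \<open>E' 0 = 0\<close> by (cases "\<xi> = 0") auto
  then show ?thesis
    using \<open>0 < d\<close> by blast
qed

theorem corollary1p11:
  fixes tau :: "real \<Rightarrow> real"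
    and beta delta :: "real \<Rightarrow> complex"
    and r :: "real \<times> real \<Rightarrow> complex"
    and lam :: "real \<Rightarrow> real \<Rightarrow> complex"
    and e0 :: real
  assumes e0_pos: "e0 > 0"
    and beta_C1: "C1_on (ball 0 e0) beta"
    and delta_C1: "C1_on (ball 0 e0) delta"
    and r_C1: "C1_on (ball (0,0) e0) r"
    and expansion: "\<And>\<epsilon> \<xi>. \<bar>\<epsilon>\<bar> < e0 \<Longrightarrow> \<bar>\<xi>\<bar> < e0 \<Longrightarrow>
        lam \<epsilon> \<xi> = \<i> * complex_of_real (\<xi> * tau \<epsilon>) - complex_of_real (\<xi>^2) * beta \<epsilon>
                  + delta \<epsilon> * complex_of_real (\<xi>^3) + r (\<epsilon>, \<xi>) * complex_of_real (\<xi>^4)"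
    and B2_re: "Re (beta 0) = 0"
    and B2_deriv: "deriv (\<lambda>\<epsilon>. Re (beta \<epsilon>)) 0 < 0"
  shows "\<exists>E. neutral_curve lam E
            \<and> (\<forall>E'. neutral_curve lam E' \<longrightarrow> (\<exists>\<sigma>>0. \<forall>\<xi>. \<bar>\<xi>\<bar> < \<sigma> \<longrightarrow> E' \<xi> = E \<xi>))
            \<and> (Re (delta 0) \<noteq> 0 \<longrightarrow>
                 E \<sim>[at 0] (\<lambda>\<xi>. Re (delta 0) / deriv (\<lambda>\<epsilon>. Re (beta \<epsilon>)) 0 * \<xi>))"
proof -
  let ?g = "reduced_growth_rate beta delta r"
  obtain \<sigma> E where "0 < \<sigma>" "C1_on (ball 0 \<sigma>) E" "E 0 = 0"
    and E_deriv: "(E has_real_derivative Re (delta 0) / deriv (\<lambda>\<epsilon>. Re (beta \<epsilon>)) 0) (at 0)"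
    and zeros: "\<And>\<epsilon> \<xi>. \<bar>\<epsilon>\<bar> < \<sigma> \<Longrightarrow> \<bar>\<xi>\<bar> < \<sigma> \<Longrightarrow> ?g (\<epsilon>, \<xi>) = 0 \<longleftrightarrow> \<epsilon> = E \<xi>"
    using reduced_growth_rate_zero_curve[OF e0_pos beta_C1 delta_C1 r_C1 B2_re B2_deriv] by blast
  have Re_lam: "Re (lam \<epsilon> \<xi>) = \<xi>^2 * ?g (\<epsilon>, \<xi>)" if "\<bar>\<epsilon>\<bar> < e0" "\<bar>\<xi>\<bar> < e0" for \<epsilon> \<xi>
    unfolding expansion[OF that] Re_expansion reduced_growth_rate_def by simp
  have "Re (lam \<epsilon> \<xi>) = 0 \<longleftrightarrow> \<epsilon> = E \<xi>"
    if "\<bar>\<epsilon>\<bar> < min \<sigma> e0" "0 < \<bar>\<xi>\<bar>" "\<bar>\<xi>\<bar> < min \<sigma> e0" for \<epsilon> \<xi>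
    using Re_lam[of \<epsilon> \<xi>] zeros[of \<epsilon> \<xi>] that by simp
  then have curve: "neutral_curve lam E"
    unfolding neutral_curve_def
    using \<open>0 < \<sigma>\<close> e0_pos \<open>C1_on (ball 0 \<sigma>) E\<close> \<open>E 0 = 0\<close> by (metis min_less_iff_conj)
  show ?thesis
    using curve neutral_curve_locally_unique[OF curve]
      asymp_equiv_at_0_of_derivative[OF E_deriv \<open>E 0 = 0\<close>] B2_deriv by auto
qed

end
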